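(* If $n_1=\dots=n_Q=n/Q$, then $\boldsymbol{c}_q[h]=\boldsymbol{b}_q[\mathcal{F}_h]$ for all $q,h$, $\hat{\boldsymbol{\theta}}_x[h]=\hat{\boldsymbol{\tau}}_x[\mathcal{F}_h]$, and $M_h=\frac{n}{4}\sum_{f\in\mathcal{F}_h}\hat{\boldsymbol{\tau}}_{x,f}'\boldsymbol{S}_{xx}^{-1}\hat{\boldsymbol{\tau}}_{x,f}$.
   Context: Setup ($2^K$ factorial experiment, finite population). $K\ge1$ two-level factors, $Q=2^K$ treatment combinations $q=1,\dots,Q$; combination $q$ sets factor $k$ at $\iota_k(q)\in\{-1,+1\}$, bijectively onto $\{-1,+1\}^K$. $F=Q-1$ factorial effects, one per nonempty $A\subseteq\{1,\dots,K\}$, enumerated $f=1,\dots,F$, with $g_{fq}=\prod_{k\in A}\iota_k(q)$; $\boldsymbol{b}_q=(g_{1q},\dots,g_{Fq})'$. Units $i=1,\dots,n$ with covariates $\boldsymbol{x}_i\in\mathbb{R}^L$; $\boldsymbol{S}_{xx}$ their finite-population covariance (divisor $n-1$, nonsingular). Treatment groups of sizes $n_q\ge1$; $\hat{\bar{\boldsymbol{x}}}(q)$ is the covariate mean in group $q$; $\hat{\boldsymbol{\tau}}_{x,f}=2^{-(K-1)}\sum_qg_{fq}\hat{\bar{\boldsymbol{x}}}(q)$; $\hat{\boldsymbol{\tau}}_x[\mathcal{I}]$ is the concatenation of $\hat{\boldsymbol{\tau}}_{x,f}$, $f\in\mathcal{I}$ (in increasing order). Tiers: partition $\{1,\dots,F\}$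 into disjoint nonempty $\mathcal{F}_1,\dots,\mathcal{F}_H$, $\mathcal{F}_{\overline h}=\bigcup_{l\le h}\mathcal{F}_l$. $\tilde{\boldsymbol{B}}=2^{-2(K-1)}\sum_qn_q^{-1}\boldsymbol{b}_q\boldsymbol{b}_q'$; $\boldsymbol{b}_q[\mathcal{I}]$ subvector, $\tilde{\boldsymbol{B}}[\mathcal{I},\mathcal{J}]$ submatrix. $\boldsymbol{c}_q[1]=\boldsymbol{b}_q[\mathcal{F}_1]$, and for $h\ge2$, $\boldsymbol{c}_q[h]=\boldsymbol{b}_q[\mathcal{F}_h]-\tilde{\boldsymbol{B}}[\mathcal{F}_h,\mathcal{F}_{\overline{h-1}}]\{\tilde{\boldsymbol{B}}[\mathcal{F}_{\overline{h-1}},\mathcal{F}_{\overline{h-1}}]\}^{-1}\boldsymbol{b}_q[\mathcal{F}_{\overline{h-1}}]$. $\hat{\boldsymbol{\theta}}_x[h]=2^{-(K-1)}\sum_q\boldsymbol{c}_q[h]\otimes\hat{\bar{\boldsymbol{x}}}(q)$, $\boldsymbol{W}_{xx}[h]=2^{-2(K-1)}\sum_qn_q^{-1}(\boldsymbol{c}_q[h]\boldsymbol{c}_q[h]')\otimes\boldsymbol{S}_{xx}$, $M_h=\hat{\boldsymbol{\theta}}_x[h]'\boldsymbol{W}_{xx}[h]^{-1}\hat{\boldsymbol{\theta}}_x[h]$. *)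

theory Defs
  imports "HOL-Library.FuncSet" "Jordan_Normal_Form.Matrix"
begin

text \<open>Treatment combinations are q = 1..2^K, factors k = 1..K,
  factorial effects f = 1..2^K-1, units i = 1..n. iota q k is the level
  (-1 or +1) of factor k in combination q; eff f is the (nonempty) set of
  factors defining effect f; Z i is the treatment combination of unit i;
  x i is the covariate vector (dimension L) of unit i.\<close>

definition minv :: "real mat \<Rightarrow> real mat" where
  "minv A = (SOME B. B \<in> carrier_mat (dim_row A) (dim_row A) \<and>
              A * B = 1\<^sub>m (dim_row A) \<and> B * A = 1\<^sub>m (dim_row A))"

definition kron_vec :: "real vec \<Rightarrow> real vec \<Rightarrow> real vec" where
  "kron_vec c v = vec (dim_vec c * dim_vec v)
     (\<lambda>j. c $ (j div dim_vec v) * v $ (j mod dim_vec v))"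

definition kron_mat :: "real mat \<Rightarrow> real mat \<Rightarrow> real mat" where
  "kron_mat A B = mat (dim_row A * dim_row B) (dim_col A * dim_col B)
     (\<lambda>(i,j). A $$ (i div dim_row B, j div dim_col B) * B $$ (i mod dim_row B, j mod dim_col B))"

definition outer :: "real vec \<Rightarrow> real mat" where
  "outer c = mat (dim_vec c) (dim_vec c) (\<lambda>(i,j). c $ i * c $ j)"

definition gfac :: "(nat \<Rightarrow> nat \<Rightarrow> real) \<Rightarrow> (nat \<Rightarrow> nat set) \<Rightarrow> nat \<Rightarrow> nat \<Rightarrow> real" where
  "gfac iota eff f q = (\<Prod>k\<in>eff f. iota q k)"

definition bsub :: "(nat \<Rightarrow> nat \<Rightarrow> real) \<Rightarrow> (nat \<Rightarrow> nat set) \<Rightarrow> nat \<Rightarrow> nat set \<Rightarrow> real vec" where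
  "bsub iota eff q I = vec (card I) (\<lambda>j. gfac iota eff (sorted_list_of_set I ! j) q)"

definition nq :: "(nat \<Rightarrow> nat) \<Rightarrow> nat \<Rightarrow> nat \<Rightarrow> nat" where
  "nq Z n q = card {i\<in>{1..n}. Z i = q}"

definition Btil :: "nat \<Rightarrow> (nat \<Rightarrow> nat \<Rightarrow> real) \<Rightarrow> (nat \<Rightarrow> nat set) \<Rightarrow> (nat \<Rightarrow> nat) \<Rightarrow> nat
    \<Rightarrow> nat \<Rightarrow> nat \<Rightarrow> real" where
  "Btil K iota eff Z n f f' = (1 / (2::real) ^ (2 * (K - 1))) *
     (\<Sum>q\<in>{1..2^K}. gfac iota eff f q * gfac iota eff f' q / real (nq Z n q))"

definition Bsub :: "nat \<Rightarrow> (nat \<Rightarrow> nat \<Rightarrow> real) \<Rightarrow> (nat \<Rightarrow> nat set) \<Rightarrow> (nat \<Rightarrow> nat) \<Rightarrow> nat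
    \<Rightarrow> nat set \<Rightarrow> nat set \<Rightarrow> real mat" where
  "Bsub K iota eff Z n I J = mat (card I) (card J)
     (\<lambda>(i,j). Btil K iota eff Z n (sorted_list_of_set I ! i) (sorted_list_of_set J ! j))"

definition Fbar :: "(nat \<Rightarrow> nat set) \<Rightarrow> nat \<Rightarrow> nat set" where
  "Fbar Fh h = (\<Union>l\<in>{1..h}. Fh l)"

definition cvec :: "nat \<Rightarrow> (nat \<Rightarrow> nat \<Rightarrow> real) \<Rightarrow> (nat \<Rightarrow> nat set) \<Rightarrow> (nat \<Rightarrow> nat) \<Rightarrow> nat
    \<Rightarrow> (nat \<Rightarrow> nat set) \<Rightarrow> nat \<Rightarrow> nat \<Rightarrow> real vec" where
  "cvec K iota eff Z n Fh q h =
     (if h \<le> 1 then bsub iota eff q (Fh 1)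
      else bsub iota eff q (Fh h) -
        Bsub K iota eff Z n (Fh h) (Fbar Fh (h - 1)) *\<^sub>v
          (minv (Bsub K iota eff Z n (Fbar Fh (h - 1)) (Fbar Fh (h - 1)))
             *\<^sub>v bsub iota eff q (Fbar Fh (h - 1))))"

definition xbar :: "(nat \<Rightarrow> nat) \<Rightarrow> nat \<Rightarrow> nat \<Rightarrow> (nat \<Rightarrow> real vec) \<Rightarrow> nat \<Rightarrow> real vec" where
  "xbar Z n L x q = vec L (\<lambda>l. (\<Sum>i\<in>{i\<in>{1..n}. Z i = q}. x i $ l) / real (nq Z n q))"

definition xmean :: "nat \<Rightarrow> nat \<Rightarrow> (nat \<Rightarrow> real vec) \<Rightarrow> real vec" where
  "xmean n L x = vec L (\<lambda>l. (\<Sum>i\<in>{1..n}. x i $ l) / real n)"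

definition Sxx :: "nat \<Rightarrow> nat \<Rightarrow> (nat \<Rightarrow> real vec) \<Rightarrow> real mat" where
  "Sxx n L x = mat L L (\<lambda>(a,b).
     (\<Sum>i\<in>{1..n}. (x i $ a - xmean n L x $ a) * (x i $ b - xmean n L x $ b)) / (real n - 1))"

definition tau_f :: "nat \<Rightarrow> (nat \<Rightarrow> nat \<Rightarrow> real) \<Rightarrow> (nat \<Rightarrow> nat set) \<Rightarrow> (nat \<Rightarrow> nat) \<Rightarrow> nat
    \<Rightarrow> nat \<Rightarrow> (nat \<Rightarrow> real vec) \<Rightarrow> nat \<Rightarrow> real vec" where
  "tau_f K iota eff Z n L x f = vec L (\<lambda>l. (1 / (2::real) ^ (K - 1)) *
     (\<Sum>q\<in>{1..2^K}. gfac iota eff f q * xbar Z n L x q $ l))"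

definition tau_sub :: "nat \<Rightarrow> (nat \<Rightarrow> nat \<Rightarrow> real) \<Rightarrow> (nat \<Rightarrow> nat set) \<Rightarrow> (nat \<Rightarrow> nat) \<Rightarrow> nat
    \<Rightarrow> nat \<Rightarrow> (nat \<Rightarrow> real vec) \<Rightarrow> nat set \<Rightarrow> real vec" where
  "tau_sub K iota eff Z n L x I = vec (card I * L)
     (\<lambda>j. tau_f K iota eff Z n L x (sorted_list_of_set I ! (j div L)) $ (j mod L))"

definition theta :: "nat \<Rightarrow> (nat \<Rightarrow> nat \<Rightarrow> real) \<Rightarrow> (nat \<Rightarrow> nat set) \<Rightarrow> (nat \<Rightarrow> nat) \<Rightarrow> nat
    \<Rightarrow> nat \<Rightarrow> (nat \<Rightarrow> real vec) \<Rightarrow> (nat \<Rightarrow> nat set) \<Rightarrow> nat \<Rightarrow> real vec" where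
  "theta K iota eff Z n L x Fh h = vec (card (Fh h) * L) (\<lambda>j. (1 / (2::real) ^ (K - 1)) *
     (\<Sum>q\<in>{1..2^K}. kron_vec (cvec K iota eff Z n Fh q h) (xbar Z n L x q) $ j))"

definition Wxx :: "nat \<Rightarrow> (nat \<Rightarrow> nat \<Rightarrow> real) \<Rightarrow> (nat \<Rightarrow> nat set) \<Rightarrow> (nat \<Rightarrow> nat) \<Rightarrow> nat
    \<Rightarrow> nat \<Rightarrow> (nat \<Rightarrow> real vec) \<Rightarrow> (nat \<Rightarrow> nat set) \<Rightarrow> nat \<Rightarrow> real mat" where
  "Wxx K iota eff Z n L x Fh h = mat (card (Fh h) * L) (card (Fh h) * L)
     (\<lambda>ij. (1 / (2::real) ^ (2 * (K - 1))) *
       (\<Sum>q\<in>{1..2^K}. kron_mat (outer (cvec K iota eff Z n Fh q h)) (Sxx n L x) $$ ij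
                      / real (nq Z n q)))"

definition Mh :: "nat \<Rightarrow> (nat \<Rightarrow> nat \<Rightarrow> real) \<Rightarrow> (nat \<Rightarrow> nat set) \<Rightarrow> (nat \<Rightarrow> nat) \<Rightarrow> nat
    \<Rightarrow> nat \<Rightarrow> (nat \<Rightarrow> real vec) \<Rightarrow> (nat \<Rightarrow> nat set) \<Rightarrow> nat \<Rightarrow> real" where
  "Mh K iota eff Z n L x Fh h =
     theta K iota eff Z n L x Fh h \<bullet>
       (minv (Wxx K iota eff Z n L x Fh h) *\<^sub>v theta K iota eff Z n L x Fh h)"

end

theory Submission
  imports Defs
begin

(* Distinct factorial contrasts are orthogonal: summing a product of the +-1 factor
   levels over all of {-1,1}^K gives 0 unless the two effects coincide.  With equal group
   sizes n/2^K this makes B~ equal to 4/n times the identity, so the projection term in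
   c_q[h] vanishes and c_q[h] = b_q[F_h].  Then theta_x[h] is the stacked vector of the
   tau_{x,f}, f in F_h, and W_xx[h] = (4/n) I (x) S_xx is block diagonal, so M_h splits
   into the per-effect quadratic forms (n/4) tau_{x,f}' S_xx^-1 tau_{x,f}. *)

lemma sum_PiE_sign_monomials:
  fixes I A B :: "nat set"
  assumes fin: "finite I" and AI: "A \<subseteq> I" and BI: "B \<subseteq> I"
  shows "(\<Sum>\<sigma>\<in>I \<rightarrow>\<^sub>E {-1, 1::real}. (\<Prod>k\<in>A. \<sigma> k) * (\<Prod>k\<in>B. \<sigma> k))
         = (if A = B then 2 ^ card I else 0)"
proof -
  have extend: "(\<Prod>k\<in>C. \<sigma> k) = (\<Prod>k\<in>I. if k \<in> C then \<sigma> k else 1)"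
    if "C \<subseteq> I" for C and \<sigma> :: "nat \<Rightarrow> real"
    using that fin by (simp add: prod.If_cases Int_absorb1)
  have "(\<Sum>\<sigma>\<in>I \<rightarrow>\<^sub>E {-1, 1::real}. (\<Prod>k\<in>A. \<sigma> k) * (\<Prod>k\<in>B. \<sigma> k))
      = (\<Sum>\<sigma>\<in>I \<rightarrow>\<^sub>E {-1, 1::real}. \<Prod>k\<in>I. (if k \<in> A then \<sigma> k else 1) * (if k \<in> B then \<sigma> k else 1))"
    by (simp add: extend[OF AI] extend[OF BI] prod.distrib)
  also have "\<dots> = (\<Prod>k\<in>I. \<Sum>s\<in>{-1, 1::real}. (if k \<in> A then s else 1) * (if k \<in> B then s else 1))"
    by (rule prod_sum_PiE[symmetric]) (use fin in auto)
  also have "\<dots> = (\<Prod>k\<in>I. if (k \<in> A) = (k \<in> B) then 2 else 0)"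
    by (rule prod.cong) auto
  also have "\<dots> = (if A = B then 2 ^ card I else 0)"
  proof (cases "A = B")
    case False
    then obtain k where "k \<in> I" "(k \<in> A) \<noteq> (k \<in> B)" using AI BI by blast
    then show ?thesis using False fin by (auto intro!: prod_zero)
  qed simp
  finally show ?thesis .
qed

lemma minv_eqI:
  assumes A: "A \<in> carrier_mat n n" and X: "X \<in> carrier_mat n n"
    and AX: "A * X = 1\<^sub>m n" and XA: "X * A = 1\<^sub>m n"
  shows "minv A = X"
proof -
  have "\<exists>B. B \<in> carrier_mat (dim_row A) (dim_row A) \<and> A * B = 1\<^sub>m (dim_row A) \<and> B * A = 1\<^sub>m (dim_row A)"
    using A X AX XA by auto
  then have B: "minv A \<in> carrier_mat n n" "minv A * A = 1\<^sub>m n"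
    unfolding minv_def using A by (metis (mono_tags, lifting) someI_ex carrier_matD(1))+
  have "minv A = minv A * (A * X)" using B(1) by (simp add: AX)
  also have "\<dots> = (minv A * A) * X" by (rule assoc_mult_mat[symmetric]) (use A B(1) X in auto)
  finally show ?thesis using B(2) X by simp
qed

lemma minv_invertible_mat:
  assumes inv: "invertible_mat A" and A: "A \<in> carrier_mat n n"
  shows "minv A \<in> carrier_mat n n" "A * minv A = 1\<^sub>m n" "minv A * A = 1\<^sub>m n"
proof -
  obtain B where AB: "A * B = 1\<^sub>m n" and BA: "B * A = 1\<^sub>m (dim_row B)"
    using inv A unfolding invertible_mat_def inverts_mat_def by auto
  have "dim_row B = n" using arg_cong[OF BA, of dim_col] A by simp
  moreover have "dim_col B = n" using arg_cong[OF AB, of dim_col] by simp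
  ultimately have B: "B \<in> carrier_mat n n" by auto
  then have "minv A = B" using minv_eqI[OF A B AB] BA by simp
  then show "minv A \<in> carrier_mat n n" "A * minv A = 1\<^sub>m n" "minv A * A = 1\<^sub>m n"
    using B AB BA by simp_all
qed

lemma smult_mult_smult_mat:
  assumes "A \<in> carrier_mat nr n" "B \<in> carrier_mat n nc"
  shows "(a \<cdot>\<^sub>m A) * (b \<cdot>\<^sub>m B) = (a * b :: 'a :: comm_semiring_0) \<cdot>\<^sub>m (A * B)"
  by (rule eq_matI) (use assms in \<open>auto simp: ac_simps\<close>)

lemma smult_inverse_mat:
  fixes c :: real
  assumes "c \<noteq> 0" and A: "A \<in> carrier_mat n n" and X: "X \<in> carrier_mat n n"
    and AX: "A * X = 1\<^sub>m n" and XA: "X * A = 1\<^sub>m n"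
  shows "(c \<cdot>\<^sub>m A) * ((1 / c) \<cdot>\<^sub>m X) = 1\<^sub>m n" "((1 / c) \<cdot>\<^sub>m X) * (c \<cdot>\<^sub>m A) = 1\<^sub>m n"
  unfolding smult_mult_smult_mat[OF A X] smult_mult_smult_mat[OF X A] AX XA
  using \<open>c \<noteq> 0\<close> by (auto intro!: eq_matI)

lemma invertible_matI:
  assumes "A \<in> carrier_mat n n" "X \<in> carrier_mat n n" "A * X = 1\<^sub>m n" "X * A = 1\<^sub>m n"
  shows "invertible_mat A"
  using assms unfolding invertible_mat_def inverts_mat_def square_mat.simps by auto

lemma invertible_mat_one: "invertible_mat (1\<^sub>m n :: real mat)"
  by (rule invertible_matI[of _ n "1\<^sub>m n"]) simp_all

lemma invertible_mat_smult:
  fixes c :: real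
  assumes "c \<noteq> 0" and inv: "invertible_mat A" and A: "A \<in> carrier_mat n n"
  shows "invertible_mat (c \<cdot>\<^sub>m A)"
  using minv_invertible_mat[OF inv A] smult_inverse_mat[OF \<open>c \<noteq> 0\<close> A]
  by (intro invertible_matI[of _ n "(1 / c) \<cdot>\<^sub>m minv A"]) (use A in simp_all)

lemma minv_smult:
  fixes c :: real
  assumes "c \<noteq> 0" and inv: "invertible_mat A" and A: "A \<in> carrier_mat n n"
  shows "minv (c \<cdot>\<^sub>m A) = (1 / c) \<cdot>\<^sub>m minv A"
  using minv_invertible_mat[OF inv A] smult_inverse_mat[OF \<open>c \<noteq> 0\<close> A]
  by (intro minv_eqI[of _ n]) (use A in simp_all)

lemma smult_mult_mat_vec:
  "dim_vec v = dim_col A \<Longrightarrow> (k \<cdot>\<^sub>m A) *\<^sub>v v = (k :: 'a :: comm_semiring_0) \<cdot>\<^sub>v (A *\<^sub>v v)"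
  by (rule eq_vecI) simp_all

definition stack_vec :: "nat \<Rightarrow> nat \<Rightarrow> (nat \<Rightarrow> real vec) \<Rightarrow> real vec" where
  "stack_vec m L u = vec (m * L) (\<lambda>j. u (j div L) $ (j mod L))"

lemma sum_lessThan_mult_blocks:
  "(\<Sum>j<m * L. F j) = (\<Sum>a<m. \<Sum>b<L. F (a * L + b :: nat))"
proof -
  have "(\<Sum>j<m * L. F j) = (\<Sum>a<m. sum F {a * L..<a * L + L})"
    by (simp add: sum.nat_group)
  also have "\<dots> = (\<Sum>a<m. \<Sum>b<L. F (a * L + b))"
    by (simp add: sum.atLeastLessThan_shift_0 atLeast0LessThan)
  finally show ?thesis .
qed

lemma block_index_bounds:
  fixes a b :: nat
  assumes "a < m" "b < L"
  shows "a * L + b < m * L" "(a * L + b) div L = a" "(a * L + b) mod L = b"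
proof -
  have "a * L + b < (a + 1) * L" using assms by simp
  also have "\<dots> \<le> m * L" using assms by (intro mult_right_mono) auto
  finally show "a * L + b < m * L" .
qed (use assms in auto)

lemma block_of_index:
  fixes i :: nat
  assumes "i < m * L"
  shows "i div L < m" "i mod L < L"
proof -
  have "L > 0" using assms by (cases "L = 0") auto
  then show "i div L < m" "i mod L < L" using assms by (auto simp: less_mult_imp_div_less)
qed

lemma index_stack_vec:
  "a < m \<Longrightarrow> b < L \<Longrightarrow> stack_vec m L u $ (a * L + b) = u a $ b"
  by (simp add: stack_vec_def block_index_bounds)

lemma dim_stack_vec[simp]: "dim_vec (stack_vec m L u) = m * L"
  by (simp add: stack_vec_def)

lemma scalar_prod_stack_vec:
  assumes "\<And>a. a < m \<Longrightarrow> dim_vec (w a) = L"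
  shows "stack_vec m L u \<bullet> stack_vec m L w = (\<Sum>a<m. u a \<bullet> w a)"
  unfolding scalar_prod_def
  by (simp add: atLeast0LessThan sum_lessThan_mult_blocks index_stack_vec assms)

lemma dim_kron_mat[simp]:
  "dim_row (kron_mat A B) = dim_row A * dim_row B" "dim_col (kron_mat A B) = dim_col A * dim_col B"
  by (simp_all add: kron_mat_def)

lemma row_kron_one_mat:
  assumes T: "T \<in> carrier_mat L L" and i: "i < m * L"
  shows "row (kron_mat (1\<^sub>m m) T) i = stack_vec m L (\<lambda>a. if a = i div L then row T (i mod L) else 0\<^sub>v L)"
proof (rule eq_vecI)
  fix j assume "j < dim_vec (stack_vec m L (\<lambda>a. if a = i div L then row T (i mod L) else 0\<^sub>v L))"
  then have "j < m * L" by simp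
  then show "row (kron_mat (1\<^sub>m m) T) i $ j = stack_vec m L (\<lambda>a. if a = i div L then row T (i mod L) else 0\<^sub>v L) $ j"
    using T i block_of_index[OF i] block_of_index[of j] by (simp add: kron_mat_def stack_vec_def)
qed (use T in simp)

lemma col_kron_one_mat:
  assumes U: "U \<in> carrier_mat L L" and j: "j < m * L"
  shows "col (kron_mat (1\<^sub>m m) U) j = stack_vec m L (\<lambda>a. if a = j div L then col U (j mod L) else 0\<^sub>v L)"
proof (rule eq_vecI)
  fix i assume "i < dim_vec (stack_vec m L (\<lambda>a. if a = j div L then col U (j mod L) else 0\<^sub>v L))"
  then have "i < m * L" by simp
  then show "col (kron_mat (1\<^sub>m m) U) j $ i = stack_vec m L (\<lambda>a. if a = j div L then col U (j mod L) else 0\<^sub>v L) $ i"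
    using U j block_of_index[OF j] block_of_index[of i] by (auto simp: kron_mat_def stack_vec_def)
qed (use U in simp)

lemma kron_one_mat_mult:
  assumes T: "T \<in> carrier_mat L L" and U: "U \<in> carrier_mat L L"
  shows "kron_mat (1\<^sub>m m) T * kron_mat (1\<^sub>m m) U = kron_mat (1\<^sub>m m) (T * U)"
proof (rule eq_matI)
  fix i j assume "i < dim_row (kron_mat (1\<^sub>m m) (T * U))" "j < dim_col (kron_mat (1\<^sub>m m) (T * U))"
  then have i: "i < m * L" and j: "j < m * L" using T U by simp_all
  have "(kron_mat (1\<^sub>m m) T * kron_mat (1\<^sub>m m) U) $$ (i, j)
      = (\<Sum>a<m. (if a = i div L then row T (i mod L) else 0\<^sub>v L) \<bullet> (if a = j div L then col U (j mod L) else 0\<^sub>v L))"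
    using i j T U by (simp add: row_kron_one_mat col_kron_one_mat scalar_prod_stack_vec)
  also have "\<dots> = (\<Sum>a<m. if a = i div L \<and> a = j div L then row T (i mod L) \<bullet> col U (j mod L) else 0)"
    using row_carrier[of T "i mod L"] col_dim[of U "j mod L"] T U by (intro sum.cong refl) auto
  also have "\<dots> = (if i div L = j div L then row T (i mod L) \<bullet> col U (j mod L) else 0)"
    using block_of_index[OF i] by (cases "i div L = j div L") (auto intro!: sum.neutral)
  also have "\<dots> = kron_mat (1\<^sub>m m) (T * U) $$ (i, j)"
    using T U i j block_of_index[OF i] block_of_index[OF j] by (simp add: kron_mat_def)
  finally show "(kron_mat (1\<^sub>m m) T * kron_mat (1\<^sub>m m) U) $$ (i, j) = kron_mat (1\<^sub>m m) (T * U) $$ (i, j)" .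
qed (use T U in simp_all)

lemma kron_one_mat_one: "kron_mat (1\<^sub>m m) (1\<^sub>m L) = (1\<^sub>m (m * L) :: real mat)"
proof (rule eq_matI)
  fix i j assume "i < dim_row (1\<^sub>m (m * L) :: real mat)" "j < dim_col (1\<^sub>m (m * L) :: real mat)"
  then have i: "i < m * L" and j: "j < m * L" by simp_all
  have "(i = j) = (i div L = j div L \<and> i mod L = j mod L)"
    by (metis div_mult_mod_eq)
  then show "kron_mat (1\<^sub>m m) (1\<^sub>m L) $$ (i, j) = (1\<^sub>m (m * L) :: real mat) $$ (i, j)"
    using i j block_of_index[OF i] block_of_index[OF j] by (simp add: kron_mat_def)
qed simp_all

lemma minv_kron_one_mat:
  assumes inv: "invertible_mat T" and T: "T \<in> carrier_mat L L"
  shows "minv (kron_mat (1\<^sub>m m) T) = kron_mat (1\<^sub>m m) (minv T)"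
proof (rule minv_eqI)
  note M = minv_invertible_mat[OF inv T]
  show "kron_mat (1\<^sub>m m) T * kron_mat (1\<^sub>m m) (minv T) = 1\<^sub>m (m * L)"
    using M by (simp add: kron_one_mat_mult[OF T] kron_one_mat_one)
  show "kron_mat (1\<^sub>m m) (minv T) * kron_mat (1\<^sub>m m) T = 1\<^sub>m (m * L)"
    using M by (simp add: kron_one_mat_mult[OF _ T] kron_one_mat_one)
qed (use T minv_invertible_mat[OF inv T] in auto)

lemma mult_mat_vec_kron_one_stack_vec:
  assumes T: "T \<in> carrier_mat L L" and u: "\<And>a. a < m \<Longrightarrow> dim_vec (u a) = L"
  shows "kron_mat (1\<^sub>m m) T *\<^sub>v stack_vec m L u = stack_vec m L (\<lambda>a. T *\<^sub>v u a)"
proof (rule eq_vecI)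
  fix i assume "i < dim_vec (stack_vec m L (\<lambda>a. T *\<^sub>v u a))"
  then have i: "i < m * L" by simp
  have "(kron_mat (1\<^sub>m m) T *\<^sub>v stack_vec m L u) $ i
      = (\<Sum>a<m. (if a = i div L then row T (i mod L) else 0\<^sub>v L) \<bullet> u a)"
    using i T u by (simp add: row_kron_one_mat scalar_prod_stack_vec)
  also have "\<dots> = (\<Sum>a<m. if a = i div L then row T (i mod L) \<bullet> u a else 0)"
    using row_carrier[of T "i mod L"] T by (intro sum.cong refl) (simp add: u carrier_vecI)
  also have "\<dots> = row T (i mod L) \<bullet> u (i div L)"
    using block_of_index[OF i] by simp
  also have "\<dots> = stack_vec m L (\<lambda>a. T *\<^sub>v u a) $ i"
    using i T block_of_index[OF i] by (simp add: stack_vec_def)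
  finally show "(kron_mat (1\<^sub>m m) T *\<^sub>v stack_vec m L u) $ i = stack_vec m L (\<lambda>a. T *\<^sub>v u a) $ i" .
qed (use T in simp)

lemma quadratic_form_kron_one_stack_vec:
  assumes T: "T \<in> carrier_mat L L" and u: "\<And>a. a < m \<Longrightarrow> dim_vec (u a) = L"
  shows "stack_vec m L u \<bullet> (kron_mat (1\<^sub>m m) T *\<^sub>v stack_vec m L u) = (\<Sum>a<m. u a \<bullet> (T *\<^sub>v u a))"
  using T by (simp add: mult_mat_vec_kron_one_stack_vec[OF T u] scalar_prod_stack_vec)

lemma kron_mat_smult_left: "kron_mat (c \<cdot>\<^sub>m A) B = kron_mat A (c \<cdot>\<^sub>m B)"
proof (rule eq_matI)
  fix i j assume "i < dim_row (kron_mat A (c \<cdot>\<^sub>m B))" "j < dim_col (kron_mat A (c \<cdot>\<^sub>m B))"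
  then show "kron_mat (c \<cdot>\<^sub>m A) B $$ (i, j) = kron_mat A (c \<cdot>\<^sub>m B) $$ (i, j)"
    using block_of_index[of i "dim_row A" "dim_row B"] block_of_index[of j "dim_col A" "dim_col B"]
    by (simp add: kron_mat_def)
qed simp_all

lemma nth_sorted_list_of_set_mem:
  "finite I \<Longrightarrow> i < card I \<Longrightarrow> sorted_list_of_set I ! i \<in> I"
  by (metis length_sorted_list_of_set nth_mem set_sorted_list_of_set)

lemma nth_sorted_list_of_set_eq_iff:
  "finite I \<Longrightarrow> i < card I \<Longrightarrow> j < card I \<Longrightarrow>
   (sorted_list_of_set I ! i = sorted_list_of_set I ! j) = (i = j)"
  by (simp add: nth_eq_iff_index_eq)

lemma sum_nth_sorted_list_of_set:
  assumes "finite I"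
  shows "(\<Sum>a<card I. g (sorted_list_of_set I ! a)) = (\<Sum>f\<in>I. g f)"
proof -
  have "(\<Sum>f\<in>I. g f) = sum_list (map g (sorted_list_of_set I))"
    using assms by (metis sum.distinct_set_conv_list distinct_sorted_list_of_set set_sorted_list_of_set)
  also have "\<dots> = (\<Sum>a<card I. g (sorted_list_of_set I ! a))"
    by (simp add: sum_list_sum_nth atLeast0LessThan)
  finally show ?thesis by simp
qed

lemma theta_eq_tau_sub:
  assumes c: "\<forall>q\<in>{1..2^K}. cvec K iota eff Z n Fh q h = bsub iota eff q (Fh h)"
  shows "theta K iota eff Z n L x Fh h = tau_sub K iota eff Z n L x (Fh h)"
proof (rule eq_vecI)
  fix j assume "j < dim_vec (tau_sub K iota eff Z n L x (Fh h))"
  then have j: "j < card (Fh h) * L" by (simp add: tau_sub_def)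
  have xbar_dim: "dim_vec (xbar Z n L x q) = L" for q by (simp add: xbar_def)
  have "kron_vec (cvec K iota eff Z n Fh q h) (xbar Z n L x q) $ j
      = gfac iota eff (sorted_list_of_set (Fh h) ! (j div L)) q * xbar Z n L x q $ (j mod L)"
    if "q \<in> {1..2^K}" for q
    using c that j block_of_index[OF j] by (simp add: kron_vec_def bsub_def xbar_dim)
  then show "theta K iota eff Z n L x Fh h $ j = tau_sub K iota eff Z n L x (Fh h) $ j"
    using j block_of_index[OF j] by (simp add: theta_def tau_sub_def tau_f_def)
qed (simp add: theta_def tau_sub_def)

lemma Wxx_eq_kron_Bsub:
  assumes c: "\<forall>q\<in>{1..2^K}. cvec K iota eff Z n Fh q h = bsub iota eff q (Fh h)"
  shows "Wxx K iota eff Z n L x Fh h = kron_mat (Bsub K iota eff Z n (Fh h) (Fh h)) (Sxx n L x)"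
proof (rule eq_matI)
  let ?S = "Sxx n L x" and ?f = "\<lambda>i. sorted_list_of_set (Fh h) ! (i div L)"
  fix i j assume "i < dim_row (kron_mat (Bsub K iota eff Z n (Fh h) (Fh h)) ?S)"
    "j < dim_col (kron_mat (Bsub K iota eff Z n (Fh h) (Fh h)) ?S)"
  then have i: "i < card (Fh h) * L" and j: "j < card (Fh h) * L" by (simp_all add: Bsub_def Sxx_def)
  have "kron_mat (outer (cvec K iota eff Z n Fh q h)) ?S $$ (i, j)
      = gfac iota eff (?f i) q * gfac iota eff (?f j) q * ?S $$ (i mod L, j mod L)" if "q \<in> {1..2^K}" for q
    using c that i j block_of_index[OF i] block_of_index[OF j]
    by (simp add: kron_mat_def outer_def bsub_def Sxx_def)
  then have "Wxx K iota eff Z n L x Fh h $$ (i, j) = 1 / 2 ^ (2 * (K - 1)) *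
      (\<Sum>q\<in>{1..2^K}. gfac iota eff (?f i) q * gfac iota eff (?f j) q / real (nq Z n q)) * ?S $$ (i mod L, j mod L)"
    using i j by (simp add: Wxx_def sum_distrib_right)
  also have "\<dots> = kron_mat (Bsub K iota eff Z n (Fh h) (Fh h)) ?S $$ (i, j)"
    using i j block_of_index[OF i] block_of_index[OF j] by (simp add: kron_mat_def Bsub_def Btil_def Sxx_def)
  finally show "Wxx K iota eff Z n L x Fh h $$ (i, j) = kron_mat (Bsub K iota eff Z n (Fh h) (Fh h)) ?S $$ (i, j)" .
qed (simp_all add: Wxx_def Bsub_def Sxx_def)

locale full_factorial =
  fixes K :: nat and iota :: "nat \<Rightarrow> nat \<Rightarrow> real" and eff :: "nat \<Rightarrow> nat set"
  assumes levels_bij: "bij_betw (\<lambda>q. restrict (iota q) {1..K}) {1..2^K} ({1..K} \<rightarrow>\<^sub>E {-1, 1})"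
    and effects_bij: "bij_betw eff {1..2^K - 1} {A. A \<subseteq> {1..K} \<and> A \<noteq> {}}"
begin

lemma gfac_orthogonal:
  assumes f: "f \<in> {1..2^K - 1}" and f': "f' \<in> {1..2^K - 1}"
  shows "(\<Sum>q\<in>{1..2^K}. gfac iota eff f q * gfac iota eff f' q) = (if f = f' then 2 ^ K else 0)"
proof -
  have sub: "eff f \<subseteq> {1..K}" "eff f' \<subseteq> {1..K}"
    using f f' bij_betw_apply[OF effects_bij] by blast+
  define \<Phi> where "\<Phi> \<sigma> = (\<Prod>k\<in>eff f. \<sigma> k) * (\<Prod>k\<in>eff f'. (\<sigma> :: nat \<Rightarrow> real) k)" for \<sigma>
  have "gfac iota eff f q * gfac iota eff f' q = \<Phi> (restrict (iota q) {1..K})" for q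
    unfolding gfac_def \<Phi>_def using sub by (intro arg_cong2[where f="(*)"] prod.cong) auto
  then have "(\<Sum>q\<in>{1..2^K}. gfac iota eff f q * gfac iota eff f' q) = (\<Sum>q\<in>{1..2^K}. \<Phi> (restrict (iota q) {1..K}))"
    by simp
  also have "\<dots> = (\<Sum>\<sigma>\<in>{1..K} \<rightarrow>\<^sub>E {-1, 1}. \<Phi> \<sigma>)"
    by (rule sum.reindex_bij_betw[OF levels_bij])
  also have "\<dots> = (if eff f = eff f' then 2 ^ card {1..K} else 0)"
    unfolding \<Phi>_def by (rule sum_PiE_sign_monomials) (use sub in auto)
  also have "(eff f = eff f') = (f = f')"
    using bij_betw_imp_inj_on[OF effects_bij] f f' by (auto dest: inj_onD)
  finally show ?thesis by simp
qed

end

locale balanced_factorial = full_factorial +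
  fixes Z :: "nat \<Rightarrow> nat" and n :: nat
  assumes K_pos: "1 \<le> K"
    and nq_pos: "\<forall>q\<in>{1..2^K}. 1 \<le> nq Z n q"
    and balanced: "\<forall>q\<in>{1..2^K}. real (nq Z n q) = real n / 2^K"
begin

lemma n_pos: "0 < real n"
proof -
  have "1 \<le> real n / 2^K"
    using nq_pos balanced by (metis atLeastAtMost_iff le_refl of_nat_1 of_nat_le_iff one_le_power one_le_numeral)
  then have "0 < real n / 2^K" by linarith
  then show ?thesis by (simp add: zero_less_divide_iff)
qed

lemma Btil_balanced:
  assumes f: "f \<in> {1..2^K - 1}" and f': "f' \<in> {1..2^K - 1}"
  shows "Btil K iota eff Z n f f' = (if f = f' then 4 / real n else 0)"
proof -
  obtain k where "K = Suc k" using K_pos by (cases K) auto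
  have "(2::real) ^ Suc k * 2 ^ Suc k = 4 * (2 ^ k * 2 ^ k)" by simp
  also have "(2::real) ^ k * 2 ^ k = 2 ^ (2 * k)" by (simp only: mult_2 power_add)
  finally have four: "(2::real) ^ K * 2 ^ K = 4 * 2 ^ (2 * (K - 1))" using \<open>K = Suc k\<close> by simp
  have "Btil K iota eff Z n f f'
      = 2 ^ K / (real n * 2 ^ (2 * (K - 1))) * (\<Sum>q\<in>{1..2^K}. gfac iota eff f q * gfac iota eff f' q)"
    unfolding Btil_def sum_distrib_left using balanced by (intro sum.cong refl) (auto simp: ac_simps)
  also have "\<dots> = (if f = f' then 4 / real n else 0)"
    unfolding gfac_orthogonal[OF f f'] using four n_pos by (simp add: field_simps)
  finally show ?thesis .
qed

lemma Bsub_balanced: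
  assumes I: "I \<subseteq> {1..2^K - 1}" and J: "J \<subseteq> {1..2^K - 1}"
  shows "Bsub K iota eff Z n I J = mat (card I) (card J)
           (\<lambda>(i, j). if sorted_list_of_set I ! i = sorted_list_of_set J ! j then 4 / real n else 0)"
  unfolding Bsub_def
proof (rule cong_mat)
  fix i j assume "i < card I" "j < card J"
  then have "sorted_list_of_set I ! i \<in> {1..2^K - 1}" "sorted_list_of_set J ! j \<in> {1..2^K - 1}"
    using I J nth_sorted_list_of_set_mem rev_finite_subset[OF finite_atLeastAtMost] by blast+
  then show "(case (i, j) of (i, j) \<Rightarrow> Btil K iota eff Z n (sorted_list_of_set I ! i) (sorted_list_of_set J ! j))
      = (case (i, j) of (i, j) \<Rightarrow> if sorted_list_of_set I ! i = sorted_list_of_set J ! j then 4 / real n else 0)"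
    by (simp add: Btil_balanced)
qed simp_all

lemma Bsub_disjoint:
  assumes I: "I \<subseteq> {1..2^K - 1}" and J: "J \<subseteq> {1..2^K - 1}" and disj: "I \<inter> J = {}"
  shows "Bsub K iota eff Z n I J = 0\<^sub>m (card I) (card J)"
proof -
  have "sorted_list_of_set I ! i \<noteq> sorted_list_of_set J ! j" if "i < card I" "j < card J" for i j
    using disj nth_sorted_list_of_set_mem[OF finite_subset[OF I finite_atLeastAtMost] that(1)]
      nth_sorted_list_of_set_mem[OF finite_subset[OF J finite_atLeastAtMost] that(2)] by (metis IntI empty_iff)
  then show ?thesis unfolding Bsub_balanced[OF I J] by (intro eq_matI) auto
qed

lemma Bsub_diagonal:
  assumes J: "J \<subseteq> {1..2^K - 1}"
  shows "Bsub K iota eff Z n J J = (4 / real n) \<cdot>\<^sub>m 1\<^sub>m (card J)"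
  unfolding Bsub_balanced[OF J J]
  using nth_sorted_list_of_set_eq_iff[OF finite_subset[OF J finite_atLeastAtMost]]
  by (intro eq_matI) auto

lemma cvec_balanced:
  assumes h: "1 \<le> h" and I: "Fh h \<subseteq> {1..2^K - 1}" and J: "Fbar Fh (h - 1) \<subseteq> {1..2^K - 1}"
    and disj: "Fh h \<inter> Fbar Fh (h - 1) = {}"
  shows "cvec K iota eff Z n Fh q h = bsub iota eff q (Fh h)"
proof (cases "h = 1")
  case True
  then show ?thesis unfolding cvec_def by simp
next
  case False
  let ?J = "Fbar Fh (h - 1)"
  (* The cross block of B~ is zero, so only the size of the projected vector w matters;
     invertibility is needed because minv of a singular matrix has unspecified dimensions. *)
  have "invertible_mat (Bsub K iota eff Z n ?J ?J)"
    unfolding Bsub_diagonal[OF J] using n_pos by (intro invertible_mat_smult invertible_mat_one) auto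
  moreover have "Bsub K iota eff Z n ?J ?J \<in> carrier_mat (card ?J) (card ?J)"
    by (simp add: Bsub_def)
  ultimately have "minv (Bsub K iota eff Z n ?J ?J) \<in> carrier_mat (card ?J) (card ?J)"
    by (rule minv_invertible_mat(1))
  define w where "w = minv (Bsub K iota eff Z n ?J ?J) *\<^sub>v bsub iota eff q ?J"
  have "w \<in> carrier_vec (card ?J)"
    unfolding w_def using \<open>minv _ \<in> carrier_mat _ _\<close> by (simp add: carrier_vecI)
  then have "Bsub K iota eff Z n (Fh h) ?J *\<^sub>v w = 0\<^sub>v (card (Fh h))"
    unfolding Bsub_disjoint[OF I J disj] by (intro eq_vecI) auto
  then show ?thesis
    using h False unfolding cvec_def w_def[symmetric] by (simp add: bsub_def)
qed

lemma Mh_balanced: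
  assumes c: "\<forall>q\<in>{1..2^K}. cvec K iota eff Z n Fh q h = bsub iota eff q (Fh h)"
    and I: "Fh h \<subseteq> {1..2^K - 1}" and S: "invertible_mat (Sxx n L x)"
  shows "Mh K iota eff Z n L x Fh h = real n / 4 *
           (\<Sum>f\<in>Fh h. tau_f K iota eff Z n L x f \<bullet> (minv (Sxx n L x) *\<^sub>v tau_f K iota eff Z n L x f))"
proof -
  let ?S = "Sxx n L x" and ?m = "card (Fh h)"
  let ?\<tau> = "\<lambda>a. tau_f K iota eff Z n L x (sorted_list_of_set (Fh h) ! a)"
  have SC: "?S \<in> carrier_mat L L" by (simp add: Sxx_def)
  note S_inv = minv_invertible_mat[OF S SC]
  have \<tau>_dim: "dim_vec (?\<tau> a) = L" for a by (simp add: tau_f_def)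
  have theta: "theta K iota eff Z n L x Fh h = stack_vec ?m L ?\<tau>"
    unfolding theta_eq_tau_sub[OF c] by (simp add: tau_sub_def stack_vec_def)
  have "Wxx K iota eff Z n L x Fh h = kron_mat (1\<^sub>m ?m) ((4 / real n) \<cdot>\<^sub>m ?S)"
    by (simp add: Wxx_eq_kron_Bsub[OF c] Bsub_diagonal[OF I] kron_mat_smult_left)
  also have "minv \<dots> = kron_mat (1\<^sub>m ?m) (minv ((4 / real n) \<cdot>\<^sub>m ?S))"
    using n_pos SC by (intro minv_kron_one_mat invertible_mat_smult[OF _ S SC]) auto
  also have "minv ((4 / real n) \<cdot>\<^sub>m ?S) = (real n / 4) \<cdot>\<^sub>m minv ?S"
    using n_pos minv_smult[OF _ S SC, of "4 / real n"] by simp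
  finally have W: "minv (Wxx K iota eff Z n L x Fh h) = kron_mat (1\<^sub>m ?m) ((real n / 4) \<cdot>\<^sub>m minv ?S)" .
  have "Mh K iota eff Z n L x Fh h = (\<Sum>a<?m. ?\<tau> a \<bullet> ((real n / 4) \<cdot>\<^sub>m minv ?S *\<^sub>v ?\<tau> a))"
    unfolding Mh_def theta W using S_inv(1) \<tau>_dim by (intro quadratic_form_kron_one_stack_vec) auto
  also have "\<dots> = real n / 4 * (\<Sum>a<?m. ?\<tau> a \<bullet> (minv ?S *\<^sub>v ?\<tau> a))"
    using S_inv(1) \<tau>_dim by (simp add: smult_mult_mat_vec sum_distrib_left)
  also have "(\<Sum>a<?m. ?\<tau> a \<bullet> (minv ?S *\<^sub>v ?\<tau> a))
      = (\<Sum>f\<in>Fh h. tau_f K iota eff Z n L x f \<bullet> (minv ?S *\<^sub>v tau_f K iota eff Z n L x f))"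
    using finite_subset[OF I finite_atLeastAtMost] by (rule sum_nth_sorted_list_of_set)
  finally show ?thesis .
qed

end

theorem proposition7:
  fixes K n L H :: nat
    and iota :: "nat \<Rightarrow> nat \<Rightarrow> real"
    and eff :: "nat \<Rightarrow> nat set"
    and Z :: "nat \<Rightarrow> nat"
    and x :: "nat \<Rightarrow> real vec"
    and Fh :: "nat \<Rightarrow> nat set"
  assumes K: "K \<ge> 1"
    and iota: "bij_betw (\<lambda>q. restrict (iota q) {1..K}) {1..2^K} ({1..K} \<rightarrow>\<^sub>E {-1, 1})"
    and eff: "bij_betw eff {1..2^K - 1} {A. A \<subseteq> {1..K} \<and> A \<noteq> {}}"
    and xdim: "\<forall>i\<in>{1..n}. dim_vec (x i) = L"
    and Z: "\<forall>i\<in>{1..n}. Z i \<in> {1..2^K}"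
    and nq_pos: "\<forall>q\<in>{1..2^K}. nq Z n q \<ge> 1"
    and S_nonsing: "invertible_mat (Sxx n L x)"
    and H: "H \<ge> 1"
    and tiers_ne: "\<forall>h\<in>{1..H}. Fh h \<noteq> {}"
    and tiers_disj: "\<forall>h\<in>{1..H}. \<forall>h'\<in>{1..H}. h \<noteq> h' \<longrightarrow> Fh h \<inter> Fh h' = {}"
    and tiers_cover: "(\<Union>h\<in>{1..H}. Fh h) = {1..2^K - 1}"
    and balanced: "\<forall>q\<in>{1..2^K}. real (nq Z n q) = real n / 2^K"
  shows "(\<forall>q\<in>{1..2^K}. \<forall>h\<in>{1..H}. cvec K iota eff Z n Fh q h = bsub iota eff q (Fh h))
       \<and> (\<forall>h\<in>{1..H}. theta K iota eff Z n L x Fh h = tau_sub K iota eff Z n L x (Fh h))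
       \<and> (\<forall>h\<in>{1..H}. Mh K iota eff Z n L x Fh h =
            real n / 4 * (\<Sum>f\<in>Fh h. tau_f K iota eff Z n L x f \<bullet>
                              (minv (Sxx n L x) *\<^sub>v tau_f K iota eff Z n L x f)))"
proof -
  interpret balanced_factorial K iota eff Z n
    using K iota eff nq_pos balanced by unfold_locales
  have tier_effects: "Fh h \<subseteq> {1..2^K - 1}" if "h \<in> {1..H}" for h
    using that tiers_cover by blast
  have earlier_tiers: "Fbar Fh (h - 1) \<subseteq> {1..2^K - 1}" "Fh h \<inter> Fbar Fh (h - 1) = {}"
    if h: "h \<in> {1..H}" for h
  proof -
    have "l \<in> {1..H}" "l \<noteq> h" if "l \<in> {1..h - 1}" for l
      using that h by auto
    then show "Fbar Fh (h - 1) \<subseteq> {1..2^K - 1}" "Fh h \<inter> Fbar Fh (h - 1) = {}"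
      unfolding Fbar_def using tier_effects h tiers_disj by blast+
  qed
  have c: "\<forall>q\<in>{1..2^K}. cvec K iota eff Z n Fh q h = bsub iota eff q (Fh h)" if "h \<in> {1..H}" for h
    using that cvec_balanced[OF _ tier_effects earlier_tiers] by auto
  show ?thesis
    using c theta_eq_tau_sub Mh_balanced[OF c tier_effects S_nonsing] by auto
qed

end
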